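(* Let $\eta>0$. For all sufficiently large $\ell$, the fundamental eigenvalue $\omega_\ell^2$ satisfies $$\frac{k^2}{2}\le\frac{\omega_\ell^2}{\ell(\ell+1)}\le k^2+\eta.$$
   Context: Fix $M>0$, $k>0$; $\Delta(r)=r^2+k^2r^4-2Mr$, $w:=\Delta/r^4$, viewed as a function of $r^\star$ defined by $dr^\star/dr=r^2/\Delta$, $r^\star(r=+\infty)=\pi/2$; $r^\star_{3M}=r^\star(r=3M)$; prime is $d/dr^\star$. For $\ell\ge2$, $\omega_\ell^2$ is defined as $$\omega_\ell^2=\inf_{R\in H^1_0((r^\star_{3M},\pi/2])\setminus\{0\}}\frac{\int_{r^\star_{3M}}^{\pi/2}\big((R')^2+w(\ell(\ell+1)-\frac{6M}{r})R^2\big)dr^\star+\frac{6Mk^2}{\ell(\ell+1)-2}R(\frac\pi2)^2}{\int_{r^\star_{3M}}^{\pi/2}R^2\,dr^\star+\frac{12M}{\ell(\ell+1)(\ell(\ell+1)-2)}R(\frac\pi2)^2},$$ where $H^1_0((r^\star_{3M},\pi/2])$ is the $H^1$-closure of smooth functions compactly supported in $(r^\star_{3M},\pi/2]$; this infimum is attained and is the lowest eigenvalue of $\omega^2R=-R''+w(\ell(\ell+1)-\frac{6M}{r})R$, $R(r^\star_{3M})=0$, $(-2\omega^2R+\frac{\ell(\ell+1)(\ell(\ell+1)-2)}{6M}R'+k^2\ell(\ell+1)R)(\pi/2)=0$. *)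

theory Defs
  imports "HOL-Analysis.Analysis"
begin

definition Delta :: "real \<Rightarrow> real \<Rightarrow> real \<Rightarrow> real" where
  "Delta M k r = r^2 + k^2 * r^4 - 2 * M * r"

definition wr :: "real \<Rightarrow> real \<Rightarrow> real \<Rightarrow> real" where
  "wr M k r = Delta M k r / r^4"

text \<open>tortoise coordinate: dr*/dr = r^2/Delta, r*(+infinity) = pi/2, i.e.
  r*(r) = pi/2 - integral over [r,infinity) of s^2/Delta(s)\<close>
definition rstar :: "real \<Rightarrow> real \<Rightarrow> real \<Rightarrow> real" where
  "rstar M k r = pi / 2 - integral {r..} (\<lambda>s. s^2 / Delta M k s)"

definition r_of :: "real \<Rightarrow> real \<Rightarrow> real \<Rightarrow> real" where
  "r_of M k x = (THE r. r \<ge> 3 * M \<and> rstar M k r = x)"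

definition rstar3M :: "real \<Rightarrow> real \<Rightarrow> real" where
  "rstar3M M k = rstar M k (3 * M)"

definition smooth_fun :: "(real \<Rightarrow> real) \<Rightarrow> bool" where
  "smooth_fun f \<longleftrightarrow> (\<forall>n x. ((deriv ^^ n) f) differentiable (at x))"

text \<open>smooth functions (restricted to [a,b]) whose support is a compact subset of (a,b]\<close>
definition test_fun :: "real \<Rightarrow> real \<Rightarrow> (real \<Rightarrow> real) \<Rightarrow> bool" where
  "test_fun a b \<phi> \<longleftrightarrow> smooth_fun \<phi> \<and> (\<exists>\<delta>>0. \<forall>x\<le>a+\<delta>. \<phi> x = 0)"

text \<open>(R, g) with R continuous on [a,b] lies in the H^1-closure of the test functions,
  with g the (weak) derivative R': there are test functions phi_n with
  phi_n \<rightarrow> R and phi_n' \<rightarrow> g in L^2(a,b).  R is the continuous representative, so the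
  boundary value R(b) is meaningful.\<close>
definition H10 :: "real \<Rightarrow> real \<Rightarrow> (real \<Rightarrow> real) \<Rightarrow> (real \<Rightarrow> real) \<Rightarrow> bool" where
  "H10 a b R g \<longleftrightarrow> continuous_on {a..b} R \<and>
     (\<exists>\<phi>::nat \<Rightarrow> real \<Rightarrow> real. (\<forall>n. test_fun a b (\<phi> n)) \<and>
        (\<forall>n. (\<lambda>x. (\<phi> n x - R x)^2) integrable_on {a..b}) \<and>
        (\<forall>n. (\<lambda>x. (deriv (\<phi> n) x - g x)^2) integrable_on {a..b}) \<and>
        (\<lambda>n. integral {a..b} (\<lambda>x. (\<phi> n x - R x)^2)
              + integral {a..b} (\<lambda>x. (deriv (\<phi> n) x - g x)^2)) \<longlonglongrightarrow> 0)"

definition rayleigh :: "real \<Rightarrow> real \<Rightarrow> nat \<Rightarrow> (real \<Rightarrow> real) \<Rightarrow> (real \<Rightarrow> real) \<Rightarrow> real" where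
  "rayleigh M k l R g =
     (let a = rstar3M M k; b = pi / 2; L = real l * (real l + 1) in
      (integral {a..b} (\<lambda>x. (g x)^2 + wr M k (r_of M k x) * (L - 6 * M / r_of M k x) * (R x)^2)
        + 6 * M * k^2 / (L - 2) * (R b)^2)
      / (integral {a..b} (\<lambda>x. (R x)^2) + 12 * M / (L * (L - 2)) * (R b)^2))"

definition omega2 :: "real \<Rightarrow> real \<Rightarrow> nat \<Rightarrow> real" where
  "omega2 M k l = Inf {rayleigh M k l R g | R g.
      H10 (rstar3M M k) (pi / 2) R g \<and> (\<exists>x\<in>{rstar3M M k .. pi / 2}. R x \<noteq> 0)}"

end

theory Submission
  imports Defs "HOL-Computational_Algebra.Polynomial" "HOL-Real_Asymp.Real_Asymp"
begin

text \<open>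
  For \<open>r \<ge> 3M\<close> one has \<open>k^2 \<le> w \<le> k^2 + 1/r^2\<close> and \<open>6M/r \<le> 2\<close>, so with \<open>L = l(l+1)\<close> the
  potential \<open>w (L - 6M/r)\<close> lies between \<open>k^2 (L - 2)\<close> and \<open>(k^2 + 1/r^2) L\<close>.
  The lower bound on the potential gives the lower bound \<open>k^2 L / 2\<close> for every Rayleigh
  quotient, because the two boundary terms are exactly in the ratio \<open>k^2 L / 2\<close>.
  For the upper bound take one smooth trial function vanishing for \<open>r \<le> r\<^sub>0\<close>, where
  \<open>1/r\<^sub>0^2 \<le> \<eta>/2\<close>: its kinetic and boundary terms do not depend on \<open>l\<close>, while its
  potential term is at most \<open>(k^2 + \<eta>/2) L\<close> times its \<open>L\<^sup>2\<close> norm, so its Rayleigh quotient is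
  eventually below \<open>(k^2 + \<eta>) L\<close>.
\<close>

section \<open>A smooth step function\<close>

text \<open>The polynomial factor makes the family closed under differentiation.\<close>

definition smooth_step :: "real poly \<Rightarrow> real \<Rightarrow> real \<Rightarrow> real" where
  "smooth_step p c t = (if c < t then poly p (1 / (t - c)) * exp (- 1 / (t - c)) else 0)"

definition smooth_step_deriv_poly :: "real poly \<Rightarrow> real poly" where
  "smooth_step_deriv_poly p = [:0, 0, 1:] * (p - pderiv p)"

lemma poly_div_exp_tendsto_0: "((\<lambda>u. poly p u / exp u) \<longlongrightarrow> (0::real)) at_top"
proof -
  have "((\<lambda>u. \<Sum>i\<le>degree p. coeff p i * (u ^ i / exp u)) \<longlongrightarrow> (\<Sum>i\<le>degree p. coeff p i * 0)) at_top"
    by (intro tendsto_sum tendsto_mult tendsto_const tendsto_power_div_exp_0)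
  then show ?thesis
    by (simp add: poly_altdef sum_divide_distrib)
qed

lemma has_field_derivative_smooth_step_off:
  assumes "t \<noteq> c"
  shows "(smooth_step p c has_field_derivative smooth_step (smooth_step_deriv_poly p) c t) (at t)"
proof (cases "c < t")
  case True
  have "((\<lambda>t. poly p (1 / (t - c)) * exp (- 1 / (t - c))) has_field_derivative
      poly (pderiv p) (1 / (t - c)) * (- 1 / (t - c)^2) * exp (- 1 / (t - c))
      + poly p (1 / (t - c)) * (exp (- 1 / (t - c)) * (1 / (t - c)^2))) (at t)"
    using True by (auto intro!: derivative_eq_intros simp: power2_eq_square)
  also have "poly (pderiv p) (1 / (t - c)) * (- 1 / (t - c)^2) * exp (- 1 / (t - c))
      + poly p (1 / (t - c)) * (exp (- 1 / (t - c)) * (1 / (t - c)^2))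
      = smooth_step (smooth_step_deriv_poly p) c t"
    using True by (simp add: smooth_step_def smooth_step_deriv_poly_def algebra_simps power2_eq_square)
  finally show ?thesis
    by (rule has_field_derivative_transform_within_open[of _ _ _ "{c<..}"])
       (use True in \<open>auto simp: smooth_step_def\<close>)
next
  case False
  with assms have "t < c" by simp
  have "((\<lambda>t. 0) has_field_derivative smooth_step (smooth_step_deriv_poly p) c t) (at t)"
    using \<open>t < c\<close> by (simp add: smooth_step_def)
  then show ?thesis
    by (rule has_field_derivative_transform_within_open[of _ _ _ "{..<c}"])
       (use \<open>t < c\<close> in \<open>auto simp: smooth_step_def\<close>)
qed

lemma has_field_derivative_smooth_step_at_step:
  "(smooth_step p c has_field_derivative 0) (at c)"
proof -
  have right: "((\<lambda>h. (smooth_step p c (c + h) - smooth_step p c c) / h) \<longlongrightarrow> 0) (at_right 0)"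
  proof -
    \<comment> \<open>with \<open>u = 1 / h\<close> the quotient is \<open>u * poly p u / exp u\<close>, and \<open>u \<rightarrow> \<infinity>\<close>\<close>
    have "((\<lambda>h. poly (pCons 0 p) (inverse h) / exp (inverse h)) \<longlongrightarrow> 0) (at_right 0)"
      by (rule filterlim_compose[OF poly_div_exp_tendsto_0 filterlim_inverse_at_top_right])
    moreover have "\<forall>\<^sub>F h in at_right 0. poly (pCons 0 p) (inverse h) / exp (inverse h)
        = (smooth_step p c (c + h) - smooth_step p c c) / h"
      using eventually_at_right_less[of "0::real"]
      by eventually_elim (simp add: smooth_step_def exp_minus divide_inverse mult_ac)
    ultimately show ?thesis
      by (rule Lim_transform_eventually)
  qed
  have "\<forall>\<^sub>F h in at_left 0. 0 = (smooth_step p c (c + h) - smooth_step p c c) / (h::real)"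
    by (auto simp: eventually_at_filter smooth_step_def)
  then have left: "((\<lambda>h. (smooth_step p c (c + h) - smooth_step p c c) / h) \<longlongrightarrow> 0) (at_left 0)"
    by (rule Lim_transform_eventually[OF tendsto_const])
  from left right show ?thesis
    by (simp add: DERIV_def filterlim_at_split)
qed

lemma has_field_derivative_smooth_step:
  "(smooth_step p c has_field_derivative smooth_step (smooth_step_deriv_poly p) c t) (at t)"
  using has_field_derivative_smooth_step_off has_field_derivative_smooth_step_at_step
  by (cases "t = c") (auto simp: smooth_step_def)

lemma higher_deriv_smooth_step:
  "(deriv ^^ n) (smooth_step p c) = smooth_step ((smooth_step_deriv_poly ^^ n) p) c"
  by (induction n) (auto simp: DERIV_imp_deriv[OF has_field_derivative_smooth_step])

lemma smooth_fun_smooth_step: "smooth_fun (smooth_step p c)"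
  unfolding smooth_fun_def higher_deriv_smooth_step
  using has_field_derivative_smooth_step real_differentiable_def by blast

section \<open>Trial functions\<close>

lemma smooth_fun_continuous_on:
  assumes "smooth_fun \<phi>"
  shows "continuous_on S \<phi>"
proof -
  have "\<phi> differentiable at x" for x
    using assms unfolding smooth_fun_def by (metis funpow_0)
  then show ?thesis
    by (simp add: continuous_at_imp_continuous_on differentiable_imp_continuous_within)
qed

lemma smooth_fun_deriv_continuous_on:
  assumes "smooth_fun \<phi>"
  shows "continuous_on S (deriv \<phi>)"
proof -
  have "deriv \<phi> differentiable at x" for x
    using assms unfolding smooth_fun_def by (metis funpow_0 funpow_Suc_right o_apply)
  then show ?thesis
    by (simp add: continuous_at_imp_continuous_on differentiable_imp_continuous_within)
qed

lemma H10_test_fun: "test_fun a b \<phi> \<Longrightarrow> H10 a b \<phi> (deriv \<phi>)"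
  unfolding H10_def test_fun_def
  by (auto intro!: exI[of _ "\<lambda>n. \<phi>"] smooth_fun_continuous_on)

lemma test_fun_smooth_step: "a < c \<Longrightarrow> test_fun a b (smooth_step p c)"
  unfolding test_fun_def
  by (auto simp: smooth_fun_smooth_step smooth_step_def intro!: exI[of _ "c - a"])

lemma measurable_on_L2_limit:
  fixes f :: "nat \<Rightarrow> real \<Rightarrow> real"
  assumes f: "\<And>n. f n measurable_on S"
    and sq: "\<And>n. (\<lambda>x. (f n x - g x)^2) integrable_on S"
    and lim: "(\<lambda>n. integral S (\<lambda>x. (f n x - g x)^2)) \<longlonglongrightarrow> 0"
  shows "g measurable_on S"
proof -
  define u where "u = (\<lambda>n x. indicator S x * (f n x - g x)^2)"
  have set_int: "set_integrable lebesgue S (\<lambda>x. (f n x - g x)^2)" for n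
    using nonnegative_absolutely_integrable_1[OF sq[of n]] by simp
  then have u_int: "integrable lebesgue (u n)" for n
    by (simp add: set_integrable_def u_def)
  have "(\<integral>x. norm (u n x) \<partial>lebesgue) = integral S (\<lambda>x. (f n x - g x)^2)" for n
    using set_lebesgue_integral_eq_integral(2)[OF set_int]
    by (simp add: u_def set_lebesgue_integral_def)
  with lim obtain r :: "nat \<Rightarrow> nat"
    where "AE x in lebesgue. (\<lambda>n. u (r n) x) \<longlonglongrightarrow> 0"
    using tendsto_L1_AE_subseq[of lebesgue u, OF u_int] by auto
  then obtain N where N: "N \<in> null_sets lebesgue"
    and u_lim: "\<And>x. x \<notin> N \<Longrightarrow> (\<lambda>n. u (r n) x) \<longlonglongrightarrow> 0"
    by (auto elim!: AE_E3)
  have lim_r: "(\<lambda>n. f (r n) x) \<longlonglongrightarrow> g x" if "x \<in> S - N" for x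
  proof -
    have "(\<lambda>n. (f (r n) x - g x)^2) \<longlonglongrightarrow> 0"
      using u_lim[of x] that by (simp add: u_def)
    then have "(\<lambda>n. f (r n) x - g x) \<longlonglongrightarrow> 0"
      by (simp only: power_tendsto_0_iff zero_less_numeral)
    then show ?thesis
      by (simp add: LIM_zero_cancel)
  qed
  have "negligible N"
    using N negligible_iff_null_sets by blast
  then show ?thesis
    by (rule measurable_on_limit[OF f _ lim_r])
qed

lemma square_integrable_L2_limit:
  fixes f :: "nat \<Rightarrow> real \<Rightarrow> real"
  assumes f: "\<And>n. continuous_on {a..b} (f n)"
    and sq: "\<And>n. (\<lambda>x. (f n x - g x)^2) integrable_on {a..b}"
    and lim: "(\<lambda>n. integral {a..b} (\<lambda>x. (f n x - g x)^2)) \<longlonglongrightarrow> 0"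
  shows "(\<lambda>x. (g x)^2) integrable_on {a..b}"
proof -
  have "g measurable_on {a..b}"
    using measurable_on_L2_limit[OF _ sq lim] f
    by (simp add: continuous_imp_measurable_on_sets_lebesgue measurable_on_iff_borel_measurable)
  then have [measurable]: "g \<in> borel_measurable (lebesgue_on {a..b})"
    by (simp add: measurable_on_iff_borel_measurable)
  have [measurable]: "f 0 \<in> borel_measurable (lebesgue_on {a..b})"
    by (simp add: continuous_imp_measurable_on_sets_lebesgue f)
  have "(\<lambda>x. (f 0 x)^2) integrable_on {a..b}"
    by (intro integrable_continuous_real continuous_intros f)
  then have bound_int: "(\<lambda>x. 2 * (f 0 x)^2 + 2 * (f 0 x - g x)^2) integrable_on {a..b}"
    using integrable_on_cmult_left[of _ "{a..b}" 2] sq[of 0] by (intro integrable_add) auto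
  have bound: "norm ((g x)^2) \<le> 2 * (f 0 x)^2 + 2 * (f 0 x - g x)^2" for x
  proof -
    have "0 \<le> (2 * f 0 x - g x)^2" by simp
    then show ?thesis by (simp add: power2_eq_square algebra_simps)
  qed
  show ?thesis
    by (rule measurable_bounded_by_integrable_imp_integrable[OF _ bound_int bound]) auto
qed

lemma H10_deriv_square_integrable:
  assumes "H10 a b R g"
  shows "(\<lambda>x. (g x)^2) integrable_on {a..b}"
proof -
  from assms obtain \<phi> :: "nat \<Rightarrow> real \<Rightarrow> real" where
    test: "\<And>n. test_fun a b (\<phi> n)" and
    R_sq: "\<And>n. (\<lambda>x. (\<phi> n x - R x)^2) integrable_on {a..b}" and
    g_sq: "\<And>n. (\<lambda>x. (deriv (\<phi> n) x - g x)^2) integrable_on {a..b}" and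
    lim: "(\<lambda>n. integral {a..b} (\<lambda>x. (\<phi> n x - R x)^2)
              + integral {a..b} (\<lambda>x. (deriv (\<phi> n) x - g x)^2)) \<longlonglongrightarrow> 0"
    unfolding H10_def by blast
  have "(\<lambda>n. integral {a..b} (\<lambda>x. (deriv (\<phi> n) x - g x)^2)) \<longlonglongrightarrow> 0"
    using R_sq g_sq
    by (intro tendsto_sandwich[OF _ _ tendsto_const lim] always_eventually allI)
       (auto intro: integral_nonneg)
  moreover have "continuous_on {a..b} (deriv (\<phi> n))" for n
    using test[of n] smooth_fun_deriv_continuous_on by (simp add: test_fun_def)
  ultimately show ?thesis
    using square_integrable_L2_limit[of a b "\<lambda>n. deriv (\<phi> n)"] g_sq by blast
qed

lemma integral_square_pos:
  fixes R :: "real \<Rightarrow> real"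
  assumes "a < b" "continuous_on {a..b} R" "x \<in> {a..b}" "R x \<noteq> 0"
  shows "0 < integral {a..b} (\<lambda>x. (R x)^2)"
proof -
  have cont: "continuous_on {a..b} (\<lambda>x. (R x)^2)"
    by (intro continuous_intros assms(2))
  then have "0 \<le> integral {a..b} (\<lambda>x. (R x)^2)"
    by (intro integral_nonneg integrable_continuous_real) auto
  moreover have "integral {a..b} (\<lambda>x. (R x)^2) \<noteq> 0"
  proof
    assume "integral {a..b} (\<lambda>x. (R x)^2) = 0"
    then have zero: "((\<lambda>x. (R x)^2) has_integral 0) (cbox a b)"
      using integrable_integral[OF integrable_continuous_real[OF cont]] by simp
    have "(R x)^2 = 0"
      by (rule has_integral_0_cbox_imp_0[OF _ _ zero]) (use cont assms(1,3) in auto)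
    with assms(4) show False
      by simp
  qed
  ultimately show ?thesis
    by simp
qed

lemma integrable_on_Icc_iff_Ico:
  fixes f :: "real \<Rightarrow> 'a::banach"
  shows "f integrable_on {a..b} \<longleftrightarrow> f integrable_on {a..<b}"
  by (rule integrable_spike_set_eq) (auto intro: negligible_subset[of "{b}"])

lemma integral_Icc_eq_Ico:
  fixes f :: "real \<Rightarrow> 'a::banach"
  shows "integral {a..b} f = integral {a..<b} f"
  by (rule integral_spike_set) (auto intro: negligible_subset[of "{b}"])

lemma integral_mult_square_le:
  fixes V R :: "'a::euclidean_space \<Rightarrow> real"
  assumes "(\<lambda>x. V x * (R x)^2) integrable_on S" "(\<lambda>x. (R x)^2) integrable_on S"
    and "\<And>x. x \<in> S \<Longrightarrow> R x \<noteq> 0 \<Longrightarrow> V x \<le> K"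
  shows "integral S (\<lambda>x. V x * (R x)^2) \<le> K * integral S (\<lambda>x. (R x)^2)"
  using assms integral_le[OF assms(1) integrable_on_cmult_left[OF assms(2), of K]]
  by (fastforce intro: mult_right_mono)

lemma integral_mult_square_ge:
  fixes V R :: "'a::euclidean_space \<Rightarrow> real"
  assumes "(\<lambda>x. V x * (R x)^2) integrable_on S" "(\<lambda>x. (R x)^2) integrable_on S"
    and "\<And>x. x \<in> S \<Longrightarrow> K \<le> V x"
  shows "K * integral S (\<lambda>x. (R x)^2) \<le> integral S (\<lambda>x. V x * (R x)^2)"
  using assms integral_le[OF integrable_on_cmult_left[OF assms(2), of K] assms(1)]
  by (fastforce intro: mult_right_mono)

lemma le_mediant:
  fixes c N P B Q :: real
  assumes "0 < B" "0 \<le> Q" "c * B \<le> N" "c * Q \<le> P"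
  shows "c \<le> (N + P) / (B + Q)"
  using assms by (simp add: pos_le_divide_eq distrib_left add_mono)

lemma divide_add_le:
  fixes c N B Q :: real
  assumes "0 < B" "0 \<le> Q" "0 \<le> c" "N \<le> c * B"
  shows "N / (B + Q) \<le> c"
proof -
  have "c * B \<le> c * (B + Q)"
    using assms by (intro mult_left_mono) auto
  with assms show ?thesis
    by (simp add: pos_divide_le_eq)
qed

section \<open>The potential\<close>

definition angular_eigenvalue :: "nat \<Rightarrow> real" where
  "angular_eigenvalue l = real l * (real l + 1)"

lemma angular_eigenvalue_ge_2: "1 \<le> l \<Longrightarrow> 2 \<le> angular_eigenvalue l"
  using mult_mono[of 1 "real l" 2 "real l + 1"] by (simp add: angular_eigenvalue_def)

lemma angular_eigenvalue_ge_6: "2 \<le> l \<Longrightarrow> 6 \<le> angular_eigenvalue l"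
  using mult_mono[of 2 "real l" 3 "real l + 1"] by (simp add: angular_eigenvalue_def)

lemma filterlim_angular_eigenvalue: "filterlim angular_eigenvalue at_top sequentially"
  unfolding angular_eigenvalue_def by real_asymp

lemma wr_bounds:
  assumes "0 \<le> M" "0 < r" "2 * M \<le> r"
  shows "k^2 \<le> wr M k r" "wr M k r \<le> k^2 + 1 / r^2"
proof -
  have wr: "wr M k r = k^2 + (r - 2 * M) * r / r^4"
    using assms(2) by (simp add: wr_def Delta_def field_simps power2_eq_square)
  have "0 \<le> (r - 2 * M) * r / r^4"
    using assms by simp
  then show "k^2 \<le> wr M k r"
    using wr by simp
  have "(r - 2 * M) * r / r^4 \<le> r * r / r^4"
    using assms by (intro divide_right_mono mult_right_mono) auto
  also have "\<dots> = 1 / r^2"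
    using assms(2) by (simp add: power2_eq_square power4_eq_xxxx)
  finally show "wr M k r \<le> k^2 + 1 / r^2"
    using wr by simp
qed

lemma wr_mult_bounds:
  assumes "0 < M" "3 * M \<le> r" "2 \<le> L"
  shows "k^2 * (L - 2) \<le> wr M k r * (L - 6 * M / r)"
    and "wr M k r * (L - 6 * M / r) \<le> (k^2 + 1 / r^2) * L"
proof -
  have "0 \<le> M" "0 < r" "2 * M \<le> r"
    using assms by auto
  note w = wr_bounds[OF this, where k = k]
  have "0 \<le> wr M k r"
    using zero_le_power2 w(1) by (rule order_trans)
  have "0 \<le> 6 * M / r" "6 * M / r \<le> 2"
    using assms \<open>0 < r\<close> by (auto simp: field_simps)
  then show "k^2 * (L - 2) \<le> wr M k r * (L - 6 * M / r)"
    using w \<open>0 \<le> wr M k r\<close> assms(3) by (intro mult_mono) auto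
  show "wr M k r * (L - 6 * M / r) \<le> (k^2 + 1 / r^2) * L"
    using w \<open>0 \<le> wr M k r\<close> assms(3) \<open>0 \<le> 6 * M / r\<close> \<open>6 * M / r \<le> 2\<close>
    by (intro mult_mono) auto
qed

definition potential :: "real \<Rightarrow> real \<Rightarrow> nat \<Rightarrow> real \<Rightarrow> real" where
  "potential M k l x = wr M k (r_of M k x) * (angular_eigenvalue l - 6 * M / r_of M k x)"

lemma rayleigh_eq:
  "rayleigh M k l R g =
     (integral {rstar3M M k..pi / 2} (\<lambda>x. (g x)^2 + potential M k l x * (R x)^2)
        + 6 * M * k^2 / (angular_eigenvalue l - 2) * (R (pi / 2))^2)
     / (integral {rstar3M M k..pi / 2} (\<lambda>x. (R x)^2)
        + 12 * M / (angular_eigenvalue l * (angular_eigenvalue l - 2)) * (R (pi / 2))^2)"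
  by (simp add: rayleigh_def Let_def angular_eigenvalue_def potential_def)

section \<open>The tortoise coordinate and the Rayleigh quotient\<close>

context
  fixes M k :: real
  assumes M: "M > 0" and k: "k > 0"
begin

lemma Delta_ge: "3 * M \<le> s \<Longrightarrow> k^2 * s^4 + s^2 / 3 \<le> Delta M k s"
  using M by (simp add: Delta_def power2_eq_square)

lemma Delta_pos:
  assumes "3 * M \<le> s"
  shows "0 < Delta M k s"
proof -
  have "0 < k^2 * s^4 + s^2 / 3"
    using assms M by (intro add_nonneg_pos) auto
  then show ?thesis
    using Delta_ge[OF assms] by linarith
qed

lemma tortoise_integrand_pos: "3 * M \<le> s \<Longrightarrow> 0 < s^2 / Delta M k s"
  using Delta_pos M by simp

lemma tortoise_integrand_le: "3 * M \<le> s \<Longrightarrow> s^2 / Delta M k s \<le> 1 / k^2 * (1 / s^2)"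
proof -
  assume s: "3 * M \<le> s"
  then have "0 < s" using M by simp
  have "k^2 * s^4 \<le> Delta M k s"
    using Delta_ge[OF s] zero_le_power2[of s] by linarith
  then have "s^2 / Delta M k s \<le> s^2 / (k^2 * s^4)"
    using \<open>0 < s\<close> k Delta_pos[OF s] by (intro divide_left_mono) auto
  also have "\<dots> = 1 / k^2 * (1 / s^2)"
    using \<open>0 < s\<close> by (simp add: field_simps power2_eq_square power4_eq_xxxx)
  finally show ?thesis .
qed

lemma tortoise_integrand_ge: "3 * M \<le> s \<Longrightarrow> 1 / (1 + k^2 * s^2) \<le> s^2 / Delta M k s"
proof -
  assume s: "3 * M \<le> s"
  then have "0 < s" using M by simp
  have "Delta M k s \<le> s^2 * (1 + k^2 * s^2)"
    using M \<open>0 < s\<close> by (simp add: Delta_def algebra_simps power2_eq_square power4_eq_xxxx)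
  then have "s^2 / (s^2 * (1 + k^2 * s^2)) \<le> s^2 / Delta M k s"
    using \<open>0 < s\<close> Delta_pos[OF s] by (intro divide_left_mono) auto
  then show ?thesis
    using \<open>0 < s\<close> by simp
qed

lemma tortoise_integrand_continuous_on: "continuous_on {3 * M..} (\<lambda>s. s^2 / Delta M k s)"
proof (rule continuous_on_divide)
  show "continuous_on {3 * M..} (Delta M k)"
    unfolding Delta_def by (intro continuous_intros)
  show "\<forall>s\<in>{3 * M..}. Delta M k s \<noteq> 0"
    using Delta_pos by force
qed (intro continuous_intros)

lemma tortoise_tail_integrable:
  assumes r: "3 * M \<le> r"
  shows "(\<lambda>s. s^2 / Delta M k s) integrable_on {r..}"
    and "integral {r..} (\<lambda>s. s^2 / Delta M k s) \<le> 1 / (k^2 * r)"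
proof -
  have "0 < r" using r M by simp
  have majorant: "((\<lambda>s. 1 / k^2 * (1 / s^2)) has_integral 1 / k^2 * (1 / r)) {r..}"
    using has_integral_inverse_power_to_inf[of 2 r] \<open>0 < r\<close>
    by (intro has_integral_mult_right) simp
  have "(\<lambda>s. s^2 / Delta M k s) \<in> borel_measurable (lebesgue_on {r..})"
    using r by (intro continuous_imp_measurable_on_sets_lebesgue
        continuous_on_subset[OF tortoise_integrand_continuous_on]) auto
  moreover have "norm (s^2 / Delta M k s) \<le> 1 / k^2 * (1 / s^2)" if "s \<in> {r..}" for s
    using that r tortoise_integrand_le[of s] tortoise_integrand_pos[of s] by simp
  ultimately show int: "(\<lambda>s. s^2 / Delta M k s) integrable_on {r..}"
    by (intro measurable_bounded_by_integrable_imp_integrable[OF _ has_integral_integrable[OF majorant]])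
       auto
  have "integral {r..} (\<lambda>s. s^2 / Delta M k s) \<le> 1 / k^2 * (1 / r)"
    using r tortoise_integrand_le by (intro has_integral_le[OF integrable_integral[OF int] majorant]) auto
  then show "integral {r..} (\<lambda>s. s^2 / Delta M k s) \<le> 1 / (k^2 * r)"
    by simp
qed

lemma rstar_diff:
  assumes r1: "3 * M \<le> r1" and r12: "r1 \<le> r2"
  shows "rstar M k r2 - rstar M k r1 = integral {r1..r2} (\<lambda>s. s^2 / Delta M k s)"
proof -
  let ?f = "\<lambda>s. s^2 / Delta M k s"
  have "(?f has_integral integral {r1..r2} ?f) {r1..r2}"
    using r1 by (intro integrable_integral integrable_continuous_real
        continuous_on_subset[OF tortoise_integrand_continuous_on]) auto
  moreover have "(?f has_integral integral {r2..} ?f) {r2..}"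
    using tortoise_tail_integrable(1) r1 r12 by (simp add: integrable_integral)
  moreover have "{r1..r2} \<inter> {r2..} = {r2}"
    using r12 by auto
  ultimately have "(?f has_integral integral {r1..r2} ?f + integral {r2..} ?f) ({r1..r2} \<union> {r2..})"
    by (intro has_integral_Un) auto
  moreover have "{r1..r2} \<union> {r2..} = {r1..}"
    using r12 by auto
  ultimately show ?thesis
    by (simp add: rstar_def integral_unique)
qed

lemma strict_mono_on_rstar: "strict_mono_on {3 * M..} (rstar M k)"
proof (rule strict_mono_onI)
  fix r1 r2 assume "r1 \<in> {3 * M..}" "r2 \<in> {3 * M..}" "r1 < r2"
  then have r1: "3 * M \<le> r1" and r12: "r1 < r2" by auto
  have "integral {r1..r2} (\<lambda>s. 1 / (1 + k^2 * r2^2)) \<le> integral {r1..r2} (\<lambda>s. s^2 / Delta M k s)"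
  proof (rule integral_le)
    show "(\<lambda>s. s^2 / Delta M k s) integrable_on {r1..r2}"
      using r1 by (intro integrable_continuous_real
          continuous_on_subset[OF tortoise_integrand_continuous_on]) auto
    fix s assume s: "s \<in> {r1..r2}"
    then have "0 \<le> s" "3 * M \<le> s" using r1 M by auto
    have "0 < (1 + k^2 * r2^2) * (1 + k^2 * s^2)"
      by (intro mult_pos_pos add_pos_nonneg) auto
    with s \<open>0 \<le> s\<close> have "1 / (1 + k^2 * r2^2) \<le> 1 / (1 + k^2 * s^2)"
      by (intro divide_left_mono add_left_mono mult_left_mono power_mono) auto
    also have "\<dots> \<le> s^2 / Delta M k s"
      using tortoise_integrand_ge[OF \<open>3 * M \<le> s\<close>] .
    finally show "1 / (1 + k^2 * r2^2) \<le> s^2 / Delta M k s" .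
  qed (rule integrable_const_ivl)
  moreover have "0 < (r2 - r1) / (1 + k^2 * r2^2)"
    using r12 by (simp add: add_pos_nonneg)
  ultimately show "rstar M k r1 < rstar M k r2"
    using rstar_diff[OF r1 less_imp_le[OF r12]] r12 by simp
qed

lemma rstar_less_pi_half:
  assumes "3 * M \<le> r"
  shows "rstar M k r < pi / 2"
proof -
  have "0 \<le> integral {r + 1..} (\<lambda>s. s^2 / Delta M k s)"
    using assms tortoise_integrand_pos
    by (intro integral_nonneg tortoise_tail_integrable(1)) (auto intro: less_imp_le)
  then have "rstar M k (r + 1) \<le> pi / 2"
    by (simp add: rstar_def)
  moreover have "rstar M k r < rstar M k (r + 1)"
    using assms strict_mono_onD[OF strict_mono_on_rstar] by simp
  ultimately show ?thesis
    by simp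
qed

lemma rstar_ge: "3 * M \<le> r \<Longrightarrow> pi / 2 - 1 / (k^2 * r) \<le> rstar M k r"
  using tortoise_tail_integrable(2) by (simp add: rstar_def)

lemma continuous_on_rstar: "continuous_on {3 * M..R} (rstar M k)"
proof -
  have "continuous_on {3 * M..R} (\<lambda>r. rstar M k (3 * M) + integral {3 * M..r} (\<lambda>s. s^2 / Delta M k s))"
    by (intro continuous_intros indefinite_integral_continuous_1 integrable_continuous_real
        continuous_on_subset[OF tortoise_integrand_continuous_on]) auto
  then show ?thesis
    by (rule continuous_on_eq) (simp add: rstar_diff[of "3 * M", symmetric])
qed

lemma rstar_surj:
  assumes x: "x \<in> {rstar3M M k..<pi / 2}"
  obtains r where "3 * M \<le> r" "rstar M k r = x"
proof -
  \<comment> \<open>\<open>rstar\<close> reaches \<open>x\<close> by the radius \<open>R\<close>, since \<open>pi / 2 - rstar M k R \<le> 1 / (k^2 R)\<close>\<close>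
  define d where "d = pi / 2 - x"
  define R where "R = 3 * M + 1 / (k^2 * d)"
  have "0 < k^2 * d"
    using x k by (simp add: d_def)
  then have R: "3 * M \<le> R" and "1 / (k^2 * d) \<le> R"
    using M by (auto simp: R_def)
  then have "1 / (k^2 * R) \<le> 1 / (k^2 * (1 / (k^2 * d)))"
    using \<open>0 < k^2 * d\<close> k M R by (intro divide_left_mono mult_left_mono mult_pos_pos) auto
  also have "\<dots> = d"
    using \<open>0 < k^2 * d\<close> k by simp
  finally have "x \<le> rstar M k R"
    using rstar_ge[OF R] by (simp add: d_def)
  moreover have "rstar M k (3 * M) \<le> x"
    using x by (simp add: rstar3M_def)
  ultimately show ?thesis
    using IVT'[OF _ _ R(1) continuous_on_rstar] that by blast
qed

lemma r_of_correct:
  assumes "x \<in> {rstar3M M k..<pi / 2}"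
  shows "3 * M \<le> r_of M k x" "rstar M k (r_of M k x) = x"
proof -
  obtain r where r: "3 * M \<le> r" "rstar M k r = x"
    using rstar_surj[OF assms] .
  have "3 * M \<le> r_of M k x \<and> rstar M k (r_of M k x) = x"
    unfolding r_of_def
    by (rule theI[of _ r]) (use r strict_mono_on_eqD[OF strict_mono_on_rstar] in auto)
  then show "3 * M \<le> r_of M k x" "rstar M k (r_of M k x) = x"
    by auto
qed

lemma r_of_greater:
  assumes "x \<in> {rstar3M M k..<pi / 2}" "3 * M \<le> r" "rstar M k r < x"
  shows "r < r_of M k x"
proof -
  have "rstar M k r < rstar M k (r_of M k x)"
    using assms r_of_correct(2) by simp
  then show ?thesis
    using strict_mono_on_less[OF strict_mono_on_rstar] assms(2) r_of_correct(1)[OF assms(1)] by blast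
qed

lemma mono_on_r_of: "mono_on {rstar3M M k..<pi / 2} (r_of M k)"
proof (rule mono_onI)
  fix x y assume "x \<in> {rstar3M M k..<pi / 2}" "y \<in> {rstar3M M k..<pi / 2}" "x \<le> y"
  then have "rstar M k (r_of M k x) \<le> rstar M k (r_of M k y)"
    using r_of_correct(2) by simp
  then show "r_of M k x \<le> r_of M k y"
    using strict_mono_on_less_eq[OF strict_mono_on_rstar] r_of_correct(1) \<open>x \<in> _\<close> \<open>y \<in> _\<close>
    by blast
qed

lemma potential_ge:
  assumes x: "x \<in> {rstar3M M k..<pi / 2}" and l: "1 \<le> l"
  shows "k^2 * (angular_eigenvalue l - 2) \<le> potential M k l x"
  using wr_mult_bounds(1)[OF M r_of_correct(1)[OF x] angular_eigenvalue_ge_2[OF l]]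
  by (simp add: potential_def)

lemma potential_nonneg:
  assumes "x \<in> {rstar3M M k..<pi / 2}" "1 \<le> l"
  shows "0 \<le> potential M k l x"
  using angular_eigenvalue_ge_2[OF assms(2)] by (intro order_trans[OF _ potential_ge[OF assms]]) simp

lemma potential_le:
  assumes x: "x \<in> {rstar3M M k..<pi / 2}" and l: "1 \<le> l" and r: "0 < r" "r \<le> r_of M k x"
  shows "potential M k l x \<le> (k^2 + 1 / r^2) * angular_eigenvalue l"
proof -
  have "1 / (r_of M k x)^2 \<le> 1 / r^2"
    using r by (intro divide_left_mono power_mono) auto
  then have "(k^2 + 1 / (r_of M k x)^2) * angular_eigenvalue l
      \<le> (k^2 + 1 / r^2) * angular_eigenvalue l"
    using angular_eigenvalue_ge_2[OF l] by (intro mult_right_mono) auto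
  with wr_mult_bounds(2)[OF M r_of_correct(1)[OF x] angular_eigenvalue_ge_2[OF l], where k = k]
  show ?thesis
    by (simp add: potential_def)
qed

lemma potential_measurable:
  "potential M k l \<in> borel_measurable (lebesgue_on {rstar3M M k..<pi / 2})"
proof -
  have [measurable]: "r_of M k \<in> borel_measurable (lebesgue_on {rstar3M M k..<pi / 2})"
  proof (rule borel_measurable_subalgebra)
    show "r_of M k \<in> borel_measurable (restrict_space borel {rstar3M M k..<pi / 2})"
      by (rule borel_measurable_mono_on_fnc[OF mono_on_r_of])
  qed (auto simp: sets_restrict_space intro!: mono_restrict_space)
  show ?thesis
    unfolding potential_def wr_def Delta_def by measurable
qed

lemma potential_mult_square_integrable:
  assumes R: "continuous_on {rstar3M M k..pi / 2} R" and l: "1 \<le> l"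
  shows "(\<lambda>x. potential M k l x * (R x)^2) integrable_on {rstar3M M k..pi / 2}"
proof -
  \<comment> \<open>\<open>r_of M k (pi / 2)\<close> is a junk value (\<open>THE\<close> of an empty predicate),
    so the estimate is made on \<open>[rstar3M M k, pi / 2)\<close>\<close>
  let ?S = "{rstar3M M k..<pi / 2}"
  define K where "K = (k^2 + 1 / (3 * M)^2) * angular_eigenvalue l"
  have [measurable]: "R \<in> borel_measurable (lebesgue_on ?S)"
    using R by (intro continuous_imp_measurable_on_sets_lebesgue continuous_on_subset[OF R]) auto
  note potential_measurable[measurable]
  have "(\<lambda>x. K * (R x)^2) integrable_on {rstar3M M k..pi / 2}"
    by (intro integrable_continuous_real continuous_intros R)
  then have majorant: "(\<lambda>x. K * (R x)^2) integrable_on ?S"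
    by (simp add: integrable_on_Icc_iff_Ico)
  have bound: "norm (potential M k l x * (R x)^2) \<le> K * (R x)^2" if x: "x \<in> ?S" for x
  proof -
    have "potential M k l x \<le> K"
      unfolding K_def using M r_of_correct(1)[OF x] by (intro potential_le[OF x l]) auto
    with potential_nonneg[OF x l] show ?thesis
      by (simp add: mult_right_mono)
  qed
  have "(\<lambda>x. potential M k l x * (R x)^2) integrable_on ?S"
    by (rule measurable_bounded_by_integrable_imp_integrable[OF _ majorant bound]) (measurable, simp)
  then show ?thesis
    by (simp add: integrable_on_Icc_iff_Ico)
qed

lemma integral_potential_ge:
  assumes R: "continuous_on {rstar3M M k..pi / 2} R" and l: "1 \<le> l"
  shows "k^2 * (angular_eigenvalue l - 2) * integral {rstar3M M k..pi / 2} (\<lambda>x. (R x)^2)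
    \<le> integral {rstar3M M k..pi / 2} (\<lambda>x. potential M k l x * (R x)^2)"
proof -
  have "(\<lambda>x. potential M k l x * (R x)^2) integrable_on {rstar3M M k..<pi / 2}"
    "(\<lambda>x. (R x)^2) integrable_on {rstar3M M k..<pi / 2}"
    unfolding integrable_on_Icc_iff_Ico[symmetric]
    by (fact potential_mult_square_integrable[OF R l]) (intro integrable_continuous_real continuous_intros R)
  then show ?thesis
    unfolding integral_Icc_eq_Ico
    by (rule integral_mult_square_ge) (use potential_ge[OF _ l] in blast)
qed

lemma integral_potential_le:
  assumes R: "continuous_on {rstar3M M k..pi / 2} R" and l: "1 \<le> l" and r0: "3 * M \<le> r0"
    and vanish: "\<And>x. x \<le> rstar M k r0 \<Longrightarrow> R x = 0"
  shows "integral {rstar3M M k..pi / 2} (\<lambda>x. potential M k l x * (R x)^2)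
    \<le> (k^2 + 1 / r0^2) * angular_eigenvalue l * integral {rstar3M M k..pi / 2} (\<lambda>x. (R x)^2)"
proof -
  have "(\<lambda>x. potential M k l x * (R x)^2) integrable_on {rstar3M M k..<pi / 2}"
    "(\<lambda>x. (R x)^2) integrable_on {rstar3M M k..<pi / 2}"
    unfolding integrable_on_Icc_iff_Ico[symmetric]
    by (fact potential_mult_square_integrable[OF R l]) (intro integrable_continuous_real continuous_intros R)
  moreover have "potential M k l x \<le> (k^2 + 1 / r0^2) * angular_eigenvalue l"
    if x: "x \<in> {rstar3M M k..<pi / 2}" and "R x \<noteq> 0" for x
  proof -
    have "r0 < r_of M k x"
      using r_of_greater[OF x r0] vanish \<open>R x \<noteq> 0\<close> by force
    then show ?thesis
      using r0 M by (intro potential_le[OF x l]) auto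
  qed
  ultimately show ?thesis
    unfolding integral_Icc_eq_Ico by (rule integral_mult_square_le)
qed

lemma rayleigh_ge:
  assumes l: "2 \<le> l" and H: "H10 (rstar3M M k) (pi / 2) R g"
    and x: "x \<in> {rstar3M M k..pi / 2}" "R x \<noteq> 0"
  shows "k^2 * angular_eigenvalue l / 2 \<le> rayleigh M k l R g"
proof -
  let ?a = "rstar3M M k" and ?b = "pi / 2"
  define L where "L = angular_eigenvalue l"
  have L: "6 \<le> L"
    using angular_eigenvalue_ge_6[OF l] by (simp add: L_def)
  have R: "continuous_on {?a..?b} R"
    using H by (simp add: H10_def)
  have "?a < ?b"
    using rstar_less_pi_half by (simp add: rstar3M_def)
  define B where "B = integral {?a..?b} (\<lambda>x. (R x)^2)"
  have "0 < B"
    unfolding B_def using integral_square_pos[OF \<open>?a < ?b\<close> R x] .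
  have g: "(\<lambda>x. (g x)^2) integrable_on {?a..?b}"
    using H10_deriv_square_integrable[OF H] .
  have "k^2 * L / 2 * B \<le> k^2 * (L - 2) * B"
    using L \<open>0 < B\<close> mult_right_mono[of 4 L "k^2"] by (intro mult_right_mono) (auto simp: field_simps)
  also have "\<dots> \<le> integral {?a..?b} (\<lambda>x. (g x)^2)
      + integral {?a..?b} (\<lambda>x. potential M k l x * (R x)^2)"
    using integral_potential_ge[OF R, of l] l integral_nonneg[OF g] by (simp add: L_def B_def)
  also have "\<dots> = integral {?a..?b} (\<lambda>x. (g x)^2 + potential M k l x * (R x)^2)"
    using integral_add[OF g potential_mult_square_integrable[OF R]] l by simp
  finally show ?thesis
    unfolding rayleigh_eq L_def[symmetric] B_def[symmetric] using \<open>0 < B\<close> L M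
    by (intro le_mediant) (auto simp: field_simps)
qed

lemma rayleigh_le:
  assumes l: "2 \<le> l" and H: "H10 (rstar3M M k) (pi / 2) R g"
    and x: "x \<in> {rstar3M M k..pi / 2}" "R x \<noteq> 0"
    and r0: "3 * M \<le> r0" and vanish: "\<And>x. x \<le> rstar M k r0 \<Longrightarrow> R x = 0"
  shows "rayleigh M k l R g \<le> (k^2 + 1 / r0^2) * angular_eigenvalue l
    + (integral {rstar3M M k..pi / 2} (\<lambda>x. (g x)^2) + 2 * M * k^2 * (R (pi / 2))^2)
      / integral {rstar3M M k..pi / 2} (\<lambda>x. (R x)^2)"
proof -
  let ?a = "rstar3M M k" and ?b = "pi / 2"
  define L where "L = angular_eigenvalue l"
  define A where "A = integral {?a..?b} (\<lambda>x. (g x)^2)"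
  define B where "B = integral {?a..?b} (\<lambda>x. (R x)^2)"
  define C where "C = (R ?b)^2"
  have L: "6 \<le> L"
    using angular_eigenvalue_ge_6[OF l] by (simp add: L_def)
  have R: "continuous_on {?a..?b} R"
    using H by (simp add: H10_def)
  have g: "(\<lambda>x. (g x)^2) integrable_on {?a..?b}"
    using H10_deriv_square_integrable[OF H] .
  have "0 < B"
    unfolding B_def using rstar_less_pi_half[of "3 * M"]
    by (intro integral_square_pos[OF _ R x]) (simp add: rstar3M_def)
  have "integral {?a..?b} (\<lambda>x. (g x)^2 + potential M k l x * (R x)^2)
      = A + integral {?a..?b} (\<lambda>x. potential M k l x * (R x)^2)"
    using integral_add[OF g potential_mult_square_integrable[OF R]] l by (simp add: A_def)
  also have "\<dots> \<le> A + (k^2 + 1 / r0^2) * L * B"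
    using integral_potential_le[OF R _ r0 vanish] l by (simp add: L_def B_def)
  finally have "integral {?a..?b} (\<lambda>x. (g x)^2 + potential M k l x * (R x)^2)
      + 6 * M * k^2 / (L - 2) * C \<le> A + (k^2 + 1 / r0^2) * L * B + 2 * M * k^2 * C"
    using L M mult_right_mono[of 5 L "k^2"]
    by (intro add_mono mult_right_mono) (auto simp: field_simps C_def)
  also have "\<dots> = ((k^2 + 1 / r0^2) * L + (A + 2 * M * k^2 * C) / B) * B"
    using \<open>0 < B\<close> by (simp add: field_simps)
  finally show ?thesis
    unfolding rayleigh_eq L_def[symmetric] A_def[symmetric] B_def[symmetric] C_def[symmetric]
    using \<open>0 < B\<close> L M g
    by (intro divide_add_le) (auto simp: A_def C_def integral_nonneg)
qed

lemma omega2_bounds: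
  assumes l: "2 \<le> l" and H: "H10 (rstar3M M k) (pi / 2) R g"
    and x: "x \<in> {rstar3M M k..pi / 2}" "R x \<noteq> 0"
  shows "k^2 * angular_eigenvalue l / 2 \<le> omega2 M k l" "omega2 M k l \<le> rayleigh M k l R g"
proof -
  define S where "S = {rayleigh M k l R g | R g. H10 (rstar3M M k) (pi / 2) R g
      \<and> (\<exists>x\<in>{rstar3M M k..pi / 2}. R x \<noteq> 0)}"
  have mem: "rayleigh M k l R g \<in> S"
    unfolding S_def using H x by blast
  have lower: "\<And>y. y \<in> S \<Longrightarrow> k^2 * angular_eigenvalue l / 2 \<le> y"
    unfolding S_def using rayleigh_ge[OF l] by blast
  show "k^2 * angular_eigenvalue l / 2 \<le> omega2 M k l"
    unfolding omega2_def S_def[symmetric] using mem lower by (intro cInf_greatest) auto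
  show "omega2 M k l \<le> rayleigh M k l R g"
    unfolding omega2_def S_def[symmetric] by (rule cInf_lower[OF mem bdd_belowI[OF lower]])
qed

lemma smooth_step_trial_function:
  assumes "3 * M < r0"
  defines "\<phi> \<equiv> smooth_step 1 (rstar M k r0)"
  shows "H10 (rstar3M M k) (pi / 2) \<phi> (deriv \<phi>)" "\<phi> (pi / 2) \<noteq> 0"
    and "\<And>x. x \<le> rstar M k r0 \<Longrightarrow> \<phi> x = 0"
proof -
  show "H10 (rstar3M M k) (pi / 2) \<phi> (deriv \<phi>)"
    unfolding \<phi>_def using strict_mono_onD[OF strict_mono_on_rstar] assms(1)
    by (intro H10_test_fun test_fun_smooth_step) (auto simp: rstar3M_def)
  show "\<phi> (pi / 2) \<noteq> 0"
    using rstar_less_pi_half[of r0] assms(1) by (simp add: \<phi>_def smooth_step_def)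
  show "\<And>x. x \<le> rstar M k r0 \<Longrightarrow> \<phi> x = 0"
    by (simp add: \<phi>_def smooth_step_def)
qed

lemma eventually_omega2_bounds:
  assumes "0 < \<epsilon>"
  shows "\<forall>\<^sub>F l in sequentially. k^2 * angular_eigenvalue l / 2 \<le> omega2 M k l
    \<and> omega2 M k l \<le> (k^2 + \<epsilon>) * angular_eigenvalue l"
proof -
  define r0 where "r0 = 3 * M + sqrt (2 / \<epsilon>)"
  define \<phi> where "\<phi> = smooth_step 1 (rstar M k r0)"
  have "0 < sqrt (2 / \<epsilon>)"
    using assms by simp
  then have r0: "3 * M < r0" "2 / \<epsilon> \<le> r0^2"
    using M by (auto simp: r0_def intro!: sqrt_le_D)
  then have "1 / r0^2 \<le> \<epsilon> / 2"
    using assms M by (simp add: field_simps)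
  note \<phi> = smooth_step_trial_function[OF r0(1), folded \<phi>_def]
  have \<phi>_mem: "pi / 2 \<in> {rstar3M M k..pi / 2}"
    using rstar_less_pi_half[of "3 * M"] by (simp add: rstar3M_def)
  \<comment> \<open>the kinetic and boundary terms of \<open>\<phi>\<close> do not depend on \<open>l\<close>\<close>
  define D where "D = (integral {rstar3M M k..pi / 2} (\<lambda>x. (deriv \<phi> x)^2)
    + 2 * M * k^2 * (\<phi> (pi / 2))^2) / integral {rstar3M M k..pi / 2} (\<lambda>x. (\<phi> x)^2)"
  have "\<forall>\<^sub>F l in sequentially. D / (\<epsilon> / 2) \<le> angular_eigenvalue l"
    using filterlim_angular_eigenvalue by (simp add: filterlim_at_top)
  with eventually_ge_at_top[of 2] show ?thesis
  proof eventually_elim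
    case (elim l)
    then have "D \<le> \<epsilon> / 2 * angular_eigenvalue l"
      using assms by (simp add: pos_divide_le_eq mult_ac)
    moreover have "(k^2 + 1 / r0^2) * angular_eigenvalue l \<le> (k^2 + \<epsilon> / 2) * angular_eigenvalue l"
      using \<open>1 / r0^2 \<le> \<epsilon> / 2\<close> angular_eigenvalue_ge_6[OF elim(1)] by (intro mult_right_mono) auto
    moreover have "rayleigh M k l \<phi> (deriv \<phi>) \<le> (k^2 + 1 / r0^2) * angular_eigenvalue l + D"
      unfolding D_def using r0(1) \<phi>(3)
      by (intro rayleigh_le[OF elim(1) \<phi>(1) \<phi>_mem \<phi>(2)]) auto
    moreover have "(k^2 + \<epsilon>) * angular_eigenvalue l
        = (k^2 + \<epsilon> / 2) * angular_eigenvalue l + \<epsilon> / 2 * angular_eigenvalue l"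
      by (simp add: algebra_simps)
    ultimately have "rayleigh M k l \<phi> (deriv \<phi>) \<le> (k^2 + \<epsilon>) * angular_eigenvalue l"
      by linarith
    then show ?case
      using omega2_bounds[OF elim(1) \<phi>(1) \<phi>_mem \<phi>(2)] by simp
  qed
qed

end

theorem lemma4p11:
  fixes M k \<eta> :: real
  assumes "M > 0" and "k > 0" and "\<eta> > 0"
  shows "\<forall>\<^sub>F l in sequentially.
           k^2 / 2 \<le> omega2 M k l / (real l * (real l + 1)) \<and>
           omega2 M k l / (real l * (real l + 1)) \<le> k^2 + \<eta>"
  using eventually_omega2_bounds[OF assms] eventually_ge_at_top[of 2]
proof eventually_elim
  case (elim l)
  moreover have "0 < angular_eigenvalue l"
    using angular_eigenvalue_ge_6[OF elim(2)] by simp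
  ultimately show ?case
    by (simp add: angular_eigenvalue_def[symmetric] pos_le_divide_eq pos_divide_le_eq)
qed

end
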